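(* The only solution $(m,p,q,x)$ in positive integers, with $p$ and $q$ odd primes, of the equation $$x^2+q^{2m}=2\cdot 17^p$$ is $(m,p,q,x)=(1,3,5,99)$. *)

theory Defs
  imports Main "HOL-Computational_Algebra.Primes"
begin

end

(*
  Put X = x and Y = q^m, so that X^2 + Y^2 = 2 * 17^p, and let A + B i = (4 + i)^p.
  In the Gaussian integers 2 = -i (1 + i)^2 and 17 = (4 + i)(4 - i); if 17 does not divide
  both X and Y, the factor 17^p of X + Y i comes entirely from one of 4 + i, 4 - i, and
  {X, Y} = {|A - B|, |A + B|}. The residues of (4 + i)^n are periodic modulo 15, 25 and 9,
  with periods 8, 20 and 24. Modulo 15 one of A - B, A + B is divisible by 3 and the other
  by 5, and since common factors 17 can be divided out this forces q to be 3 or 5. Modulo 25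
  and 9, q^2 cannot divide A +- B unless q divides p, which leaves only finitely many cases
  and yields m = 1. Finally (4 + i)^(4k) - 1 = c z with c <> 0 and z not divisible by 1 + i,
  so for p >= 5 the numbers A +- B differ from their values at p mod 4 while agreeing with
  them modulo 80; this excludes |A +- B| = q, so p = 3, where A = 52 and B = 47.
*)
theory Submission
  imports Defs "HOL-Number_Theory.Cong"
begin

section \<open>Gaussian integers\<close>

datatype gauss = Gauss (re: int) (im: int)

lemma gauss_eq_iff: "z = w \<longleftrightarrow> re z = re w \<and> im z = im w"
  by (cases z; cases w) auto

instantiation gauss :: comm_ring_1
begin

definition "0 = Gauss 0 0"
definition "1 = Gauss 1 0"
definition "z + w = Gauss (re z + re w) (im z + im w)"
definition "z - w = Gauss (re z - re w) (im z - im w)"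
definition "- z = Gauss (- re z) (- im z)"
definition "z * w = Gauss (re z * re w - im z * im w) (re z * im w + im z * re w)"

instance
  by standard (auto simp: gauss_eq_iff zero_gauss_def one_gauss_def plus_gauss_def
      minus_gauss_def uminus_gauss_def times_gauss_def algebra_simps)

end

lemma re_gauss_simps [simp]:
  "re 0 = 0" "re 1 = 1" "re (z + w) = re z + re w" "re (z - w) = re z - re w"
  "re (- z) = - re z" "re (z * w) = re z * re w - im z * im w"
  and im_gauss_simps [simp]:
  "im 0 = 0" "im 1 = 0" "im (z + w) = im z + im w" "im (z - w) = im z - im w"
  "im (- z) = - im z" "im (z * w) = re z * im w + im z * re w"
  by (simp_all add: zero_gauss_def one_gauss_def plus_gauss_def minus_gauss_def
      uminus_gauss_def times_gauss_def)

lemma Gauss_mult: "Gauss a b * Gauss c d = Gauss (a * c - b * d) (a * d + b * c)"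
  by (simp add: gauss_eq_iff)

lemma re_of_nat [simp]: "re (of_nat n) = int n"
  and im_of_nat [simp]: "im (of_nat n) = 0"
  by (induction n) simp_all

lemma re_of_int [simp]: "re (of_int c) = c"
  and im_of_int [simp]: "im (of_int c) = 0"
  by (cases c rule: int_cases; simp)+

lemma re_numeral [simp]: "re (numeral k) = numeral k"
  and im_numeral [simp]: "im (numeral k) = 0"
  using re_of_int[of "numeral k"] im_of_int[of "numeral k"] by simp_all

lemma of_int_dvd_gauss_iff: "of_int c dvd z \<longleftrightarrow> c dvd re z \<and> c dvd im z"
proof
  assume "of_int c dvd z"
  then obtain w where "z = of_int c * w" ..
  then show "c dvd re z \<and> c dvd im z" by simp
next
  assume "c dvd re z \<and> c dvd im z"
  then obtain a b where "re z = c * a" "im z = c * b" by (auto elim!: dvdE)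
  then have "z = of_int c * Gauss a b" by (simp add: gauss_eq_iff)
  then show "of_int c dvd z" ..
qed

lemma numeral_dvd_gauss_iff: "numeral k dvd z \<longleftrightarrow> numeral k dvd re z \<and> numeral k dvd im z"
  using of_int_dvd_gauss_iff[of "numeral k" z] by simp

definition gnorm :: "gauss \<Rightarrow> int" where
  "gnorm z = re z ^ 2 + im z ^ 2"

definition gcnj :: "gauss \<Rightarrow> gauss" where
  "gcnj z = Gauss (re z) (- im z)"

lemma gnorm_mult: "gnorm (z * w) = gnorm z * gnorm w"
  by (simp add: gnorm_def power2_eq_square algebra_simps)

lemma gcnj_mult: "gcnj (z * w) = gcnj z * gcnj w"
  by (simp add: gcnj_def gauss_eq_iff)

lemma gcnj_power: "gcnj (z ^ n) = gcnj z ^ n"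
proof (induction n)
  case 0
  show ?case by (simp add: gcnj_def gauss_eq_iff)
next
  case (Suc n)
  then show ?case by (simp add: gcnj_mult)
qed

definition re_plus_im :: "gauss \<Rightarrow> int" where
  "re_plus_im z = re z + im z"

definition re_minus_im :: "gauss \<Rightarrow> int" where
  "re_minus_im z = re z - im z"

lemma re_plus_im_Gauss [simp]: "re_plus_im (Gauss a b) = a + b"
  and re_minus_im_Gauss [simp]: "re_minus_im (Gauss a b) = a - b"
  by (simp_all add: re_plus_im_def re_minus_im_def)

lemma re_plus_im_diff: "re_plus_im (z - w) = re_plus_im z - re_plus_im w"
  and re_minus_im_diff: "re_minus_im (z - w) = re_minus_im z - re_minus_im w"
  by (simp_all add: re_plus_im_def re_minus_im_def)

lemma re_plus_im_of_int_mult: "re_plus_im (of_int c * z) = c * re_plus_im z"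
  and re_minus_im_of_int_mult: "re_minus_im (of_int c * z) = c * re_minus_im z"
  by (simp_all add: re_plus_im_def re_minus_im_def algebra_simps)

lemma re_plus_im_gcnj: "re_plus_im (gcnj z) = re_minus_im z"
  and re_minus_im_gcnj: "re_minus_im (gcnj z) = re_plus_im z"
  by (simp_all add: re_plus_im_def re_minus_im_def gcnj_def)

text \<open>The parity of \<^term>\<open>re_plus_im z\<close> is the residue of \<^term>\<open>z\<close> modulo the prime \<open>1 + i\<close>.\<close>

lemma odd_re_plus_im_mult: "odd (re_plus_im (z * w)) \<longleftrightarrow> odd (re_plus_im z) \<and> odd (re_plus_im w)"
proof -
  have "re_plus_im (z * w) = re_plus_im z * re_plus_im w - 2 * (im z * im w)"
    by (simp add: re_plus_im_def algebra_simps)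
  then show ?thesis by simp
qed

lemma odd_re_plus_im_power: "odd (re_plus_im z) \<Longrightarrow> odd (re_plus_im (z ^ n))"
  by (induction n) (simp_all add: odd_re_plus_im_mult, simp add: re_plus_im_def)

lemma odd_re_minus_im_iff: "odd (re_minus_im z) \<longleftrightarrow> odd (re_plus_im z)"
proof -
  have "re_minus_im z = re_plus_im z - 2 * im z"
    by (simp add: re_plus_im_def re_minus_im_def)
  then show ?thesis by simp
qed

lemma odd_re_plus_im_sum:
  fixes k :: nat
  assumes "\<And>i. i < k \<Longrightarrow> odd (re_plus_im (f i))"
  shows "odd (re_plus_im (\<Sum>i<k. f i)) \<longleftrightarrow> odd k"
  using assms
proof (induction k)
  case 0
  then show ?case by (simp add: re_plus_im_def)
next
  case (Suc k)
  have "re_plus_im (\<Sum>i<Suc k. f i) = re_plus_im (\<Sum>i<k. f i) + re_plus_im (f k)"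
    by (simp add: re_plus_im_def)
  with Suc show ?case by simp
qed

abbreviation \<alpha> :: gauss where
  "\<alpha> \<equiv> Gauss 4 1"

lemma \<alpha>_power_3: "\<alpha> ^ 3 = Gauss 52 47"
  by (simp add: Gauss_mult eval_nat_numeral)

section \<open>Sums of two squares equal to \<open>2 * 17 ^ n\<close>\<close>

lemma \<alpha>_mult_gcnj_\<alpha>: "\<alpha> * gcnj \<alpha> = 17"
  by (simp add: gcnj_def gauss_eq_iff)

lemma \<alpha>_or_gcnj_\<alpha>_dvd:
  assumes "17 dvd gnorm z"
  shows "\<alpha> dvd z \<or> gcnj \<alpha> dvd z"
proof -
  define a b where "a = re z" and "b = im z"
  have "(4 * a + b) * (4 * a - b) = 17 * a ^ 2 - gnorm z"
    by (simp add: a_def b_def gnorm_def power2_eq_square algebra_simps)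
  with assms have "17 dvd (4 * a + b) * (4 * a - b)" by simp
  then have "17 dvd 4 * a + b \<or> 17 dvd 4 * a - b"
    by (simp add: prime_dvd_mult_iff)
  then show ?thesis
  proof
    assume "17 dvd 4 * a + b"
    then obtain k where "4 * a + b = 17 * k" ..
    then have "z = \<alpha> * Gauss k (4 * k - a)"
      by (simp add: gauss_eq_iff a_def b_def)
    then show ?thesis by (metis dvd_triv_left)
  next
    assume "17 dvd 4 * a - b"
    then obtain k where "4 * a - b = 17 * k" ..
    then have "z = gcnj \<alpha> * Gauss k (a - 4 * k)"
      by (simp add: gauss_eq_iff gcnj_def a_def b_def)
    then show ?thesis by (metis dvd_triv_left)
  qed
qed

text \<open>Since \<open>17 = \<alpha> * gcnj \<alpha>\<close> does not divide \<^term>\<open>z\<close>, all factors of norm 17 split off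
  from \<^term>\<open>z\<close> are the same one of \<^term>\<open>\<alpha>\<close> and \<^term>\<open>gcnj \<alpha>\<close>.\<close>

lemma gnorm_eq_2_17_power_factor:
  assumes "gnorm z = 2 * 17 ^ n" "\<not> 17 dvd z"
  shows "\<exists>w \<pi>. gnorm w = 2 \<and> \<pi> \<in> {\<alpha>, gcnj \<alpha>} \<and> z = w * \<pi> ^ n"
  using assms
proof (induction n arbitrary: z)
  case 0
  then show ?case by auto
next
  case (Suc n)
  then have "17 dvd gnorm z" by simp
  then obtain \<sigma> z' where \<sigma>: "\<sigma> \<in> {\<alpha>, gcnj \<alpha>}" and z: "z = \<sigma> * z'"
    using \<alpha>_or_gcnj_\<alpha>_dvd by blast
  have "gnorm \<sigma> = 17" using \<sigma> by (auto simp: gnorm_def gcnj_def)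
  with z Suc.prems(1) have "gnorm z' = 2 * 17 ^ n" by (simp add: gnorm_mult)
  moreover have "\<not> 17 dvd z'" using z Suc.prems(2) by auto
  ultimately obtain w \<pi> where w: "gnorm w = 2" and \<pi>: "\<pi> \<in> {\<alpha>, gcnj \<alpha>}"
    and z': "z' = w * \<pi> ^ n"
    using Suc.IH by blast
  show ?case
  proof (cases "n = 0 \<or> \<pi> = \<sigma>")
    case True
    then have "z = w * \<sigma> ^ Suc n" using z z' by (auto simp: mult_ac)
    then show ?thesis using w \<sigma> by blast
  next
    case False
    then obtain k where k: "n = Suc k" by (cases n) auto
    from False \<sigma> \<pi> have "\<sigma> * \<pi> = 17" using \<alpha>_mult_gcnj_\<alpha> by (auto simp: mult.commute)
    moreover have "z = (\<sigma> * \<pi>) * (w * \<pi> ^ k)" using z z' k by (simp add: mult_ac)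
    ultimately have "z = 17 * (w * \<pi> ^ k)" by simp
    then show ?thesis using Suc.prems(2) by auto
  qed
qed

lemma gnorm_eq_2_re_im:
  assumes "gnorm w = 2"
  shows "re w \<in> {1, -1} \<and> im w \<in> {1, -1}"
proof -
  have small: "a \<in> {-1, 0, 1}" if "a ^ 2 \<le> 2" for a :: int
  proof -
    have "\<bar>a\<bar> \<le> 1"
    proof (rule ccontr)
      assume "\<not> \<bar>a\<bar> \<le> 1"
      then have "2 ^ 2 \<le> \<bar>a\<bar> ^ 2" by (intro power_mono) auto
      with that show False by simp
    qed
    then show ?thesis by (auto simp: abs_le_iff)
  qed
  from assms have sum: "re w ^ 2 + im w ^ 2 = 2" by (simp add: gnorm_def)
  then have "re w ^ 2 \<le> 2" "im w ^ 2 \<le> 2"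
    using zero_le_power2[of "re w"] zero_le_power2[of "im w"] by linarith+
  then have "re w \<in> {-1, 0, 1}" "im w \<in> {-1, 0, 1}"
    using small by blast+
  with sum show ?thesis by auto
qed

lemma gnorm_eq_2_mult_abs:
  assumes "gnorm w = 2"
  shows "(\<bar>re (w * v)\<bar> = \<bar>re_minus_im v\<bar> \<and> \<bar>im (w * v)\<bar> = \<bar>re_plus_im v\<bar>) \<or>
    (\<bar>re (w * v)\<bar> = \<bar>re_plus_im v\<bar> \<and> \<bar>im (w * v)\<bar> = \<bar>re_minus_im v\<bar>)"
proof -
  from gnorm_eq_2_re_im[OF assms] consider
    "re w = 1" "im w = 1" | "re w = 1" "im w = -1" | "re w = -1" "im w = 1" | "re w = -1" "im w = -1"
    by auto
  then show ?thesis
    by cases (simp_all add: re_plus_im_def re_minus_im_def ac_simps abs_minus_commute)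
qed

lemma sum_squares_eq_2_17_power:
  fixes x y :: int
  assumes "x > 0" "y > 0" "x ^ 2 + y ^ 2 = 2 * 17 ^ n" "\<not> (17 dvd x \<and> 17 dvd y)"
  shows "(x = \<bar>re_minus_im (\<alpha> ^ n)\<bar> \<and> y = \<bar>re_plus_im (\<alpha> ^ n)\<bar>) \<or>
    (x = \<bar>re_plus_im (\<alpha> ^ n)\<bar> \<and> y = \<bar>re_minus_im (\<alpha> ^ n)\<bar>)"
proof -
  have "gnorm (Gauss x y) = 2 * 17 ^ n" "\<not> 17 dvd Gauss x y"
    using assms(3,4) by (simp_all add: gnorm_def numeral_dvd_gauss_iff)
  then obtain w \<pi> where w: "gnorm w = 2" and \<pi>: "\<pi> \<in> {\<alpha>, gcnj \<alpha>}"
    and xy: "Gauss x y = w * \<pi> ^ n"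
    using gnorm_eq_2_17_power_factor by blast
  have x: "x = \<bar>re (w * \<pi> ^ n)\<bar>" and y: "y = \<bar>im (w * \<pi> ^ n)\<bar>"
    using assms(1,2) by (simp_all flip: xy)
  from \<pi> have "\<pi> ^ n = \<alpha> ^ n \<or> \<pi> ^ n = gcnj (\<alpha> ^ n)"
    by (auto simp: gcnj_power)
  then show ?thesis
  proof
    assume "\<pi> ^ n = \<alpha> ^ n"
    then show ?thesis
      using gnorm_eq_2_mult_abs[OF w, of "\<alpha> ^ n"] by (simp only: x y)
  next
    assume "\<pi> ^ n = gcnj (\<alpha> ^ n)"
    then show ?thesis
      using gnorm_eq_2_mult_abs[OF w, of "gcnj (\<alpha> ^ n)"]
      by (simp only: x y re_plus_im_gcnj re_minus_im_gcnj disj_commute)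
  qed
qed

section \<open>Powers of \<^term>\<open>\<alpha>\<close> modulo 15, 25 and 9\<close>

lemma power_minus_power_mod_dvd:
  fixes a c :: "'a :: comm_ring_1"
  assumes "c dvd a ^ P - 1"
  shows "c dvd a ^ n - a ^ (n mod P)"
proof -
  have "a ^ n = a ^ (n mod P) * (a ^ P) ^ (n div P)"
    by (metis mod_div_mult_eq mult.commute power_add power_mult)
  then have "a ^ n - a ^ (n mod P) = a ^ (n mod P) * ((a ^ P) ^ (n div P) - 1)"
    by (simp add: algebra_simps)
  moreover have "a ^ P - 1 dvd (a ^ P) ^ (n div P) - 1"
    by (metis power_diff_1_eq dvd_triv_left)
  ultimately show ?thesis
    using assms by (metis dvd_trans dvd_mult)
qed

lemma re_plus_im_power_cong:
  assumes "of_int M dvd z ^ P - 1"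
  shows "[re_plus_im (z ^ n) = re_plus_im (z ^ (n mod P))] (mod M)"
    and "[re_minus_im (z ^ n) = re_minus_im (z ^ (n mod P))] (mod M)"
proof -
  have "M dvd re_plus_im (z ^ n - z ^ (n mod P))" "M dvd re_minus_im (z ^ n - z ^ (n mod P))"
    using power_minus_power_mod_dvd[OF assms, of n]
    unfolding of_int_dvd_gauss_iff re_plus_im_def re_minus_im_def by (simp_all only: dvd_add dvd_diff)
  then show "[re_plus_im (z ^ n) = re_plus_im (z ^ (n mod P))] (mod M)"
    and "[re_minus_im (z ^ n) = re_minus_im (z ^ (n mod P))] (mod M)"
    by (simp_all only: cong_iff_dvd_diff re_plus_im_diff re_minus_im_diff)
qed

lemma dvd_re_plus_im_power_iff:
  assumes "of_int M dvd z ^ P - 1" "d dvd M"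
  shows "d dvd re_plus_im (z ^ n) \<longleftrightarrow> d dvd re_plus_im (z ^ (n mod P))"
    and "d dvd re_minus_im (z ^ n) \<longleftrightarrow> d dvd re_minus_im (z ^ (n mod P))"
  using re_plus_im_power_cong[OF assms(1)] assms(2) by (metis cong_dvd_iff cong_dvd_modulus)+

lemma \<alpha>_power_dvd_3_5:
  assumes "odd n"
  shows "(3 dvd re_minus_im (\<alpha> ^ n) \<and> 5 dvd re_plus_im (\<alpha> ^ n)) \<or>
    (5 dvd re_minus_im (\<alpha> ^ n) \<and> 3 dvd re_plus_im (\<alpha> ^ n))"
proof -
  have period: "of_int 15 dvd \<alpha> ^ 8 - 1"
    unfolding of_int_dvd_gauss_iff by (simp add: Gauss_mult eval_nat_numeral)
  have "(3::int) dvd 15" "(5::int) dvd 15"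
    by simp_all
  note reduce = dvd_re_plus_im_power_iff[OF period this(1), of n]
    dvd_re_plus_im_power_iff[OF period this(2), of n]
  have "n mod 8 \<in> {1, 3, 5, 7}"
    using assms by simp presburger
  moreover have "\<forall>r \<in> {1, 3, 5, 7}. (3 dvd re_minus_im (\<alpha> ^ r) \<and> 5 dvd re_plus_im (\<alpha> ^ r)) \<or>
      (5 dvd re_minus_im (\<alpha> ^ r) \<and> 3 dvd re_plus_im (\<alpha> ^ r))"
    by (simp add: Gauss_mult eval_nat_numeral)
  ultimately show ?thesis
    unfolding reduce by blast
qed

lemma \<alpha>_power_not_dvd_25:
  assumes "odd n" "\<not> 5 dvd n"
  shows "\<not> 25 dvd re_plus_im (\<alpha> ^ n) \<and> \<not> 25 dvd re_minus_im (\<alpha> ^ n)"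
proof -
  have period: "of_int 25 dvd \<alpha> ^ 20 - 1"
    unfolding of_int_dvd_gauss_iff by (simp add: Gauss_mult eval_nat_numeral)
  have "n mod 20 \<in> {1, 3, 7, 9, 11, 13, 17, 19}"
    using assms by simp presburger
  moreover have "\<forall>r \<in> {1, 3, 7, 9, 11, 13, 17, 19}.
      \<not> 25 dvd re_plus_im (\<alpha> ^ r) \<and> \<not> 25 dvd re_minus_im (\<alpha> ^ r)"
    by (simp add: Gauss_mult eval_nat_numeral)
  ultimately show ?thesis
    unfolding dvd_re_plus_im_power_iff[OF period dvd_refl, of n] by blast
qed

lemma \<alpha>_power_not_dvd_9:
  assumes "odd n" "\<not> 3 dvd n"
  shows "\<not> 9 dvd re_plus_im (\<alpha> ^ n) \<and> \<not> 9 dvd re_minus_im (\<alpha> ^ n)"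
proof -
  have period: "of_int 9 dvd \<alpha> ^ 24 - 1"
    unfolding of_int_dvd_gauss_iff by (simp add: Gauss_mult eval_nat_numeral)
  have "n mod 24 \<in> {1, 5, 7, 11, 13, 17, 19, 23}"
    using assms by simp presburger
  moreover have "\<forall>r \<in> {1, 5, 7, 11, 13, 17, 19, 23}.
      \<not> 9 dvd re_plus_im (\<alpha> ^ r) \<and> \<not> 9 dvd re_minus_im (\<alpha> ^ r)"
    by (simp add: Gauss_mult eval_nat_numeral)
  ultimately show ?thesis
    unfolding dvd_re_plus_im_power_iff[OF period dvd_refl, of n] by blast
qed

lemma sum_squares_eq_2_17_power_dvd_3_5:
  fixes x y :: int
  assumes "odd n" "x > 0" "y > 0" "x ^ 2 + y ^ 2 = 2 * 17 ^ n"
  shows "(3 dvd x \<and> 5 dvd y) \<or> (5 dvd x \<and> 3 dvd y)"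
  using assms
proof (induction n arbitrary: x y rule: less_induct)
  case (less n)
  show ?case
  proof (cases "17 dvd x \<and> 17 dvd y")
    case False
    then show ?thesis
      using sum_squares_eq_2_17_power[OF less.prems(2-4) False] \<alpha>_power_dvd_3_5[OF less.prems(1)]
      by (elim disjE conjE) simp_all
  next
    case True
    then obtain x' y' where xy: "x = 17 * x'" "y = 17 * y'"
      by (auto elim!: dvdE)
    with less.prems have "x' > 0" "y' > 0"
      by (simp_all add: zero_less_mult_iff)
    have eq: "289 * (x' ^ 2 + y' ^ 2) = 2 * 17 ^ n"
      using less.prems(4) xy by (simp add: power_mult_distrib algebra_simps)
    have "n \<noteq> 1"
    proof
      assume "n = 1"
      moreover have "x' ^ 2 + y' ^ 2 > 0"
        using \<open>x' > 0\<close> by (simp add: add_pos_nonneg)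
      ultimately show False using eq by simp
    qed
    with less.prems(1) have "2 \<le> n"
      by presburger
    define k where "k = n - 2"
    with \<open>2 \<le> n\<close> have n: "n = k + 2"
      by simp
    with eq have "x' ^ 2 + y' ^ 2 = 2 * 17 ^ k"
      by (simp add: power_add)
    moreover have "k < n" "odd k"
      using n less.prems(1) by simp_all
    ultimately have "(3 dvd x' \<and> 5 dvd y') \<or> (5 dvd x' \<and> 3 dvd y')"
      using less.IH \<open>x' > 0\<close> \<open>y' > 0\<close> by blast
    then show ?thesis
      unfolding xy by (meson dvd_mult)
  qed
qed

lemma prime_power_eq_abs_\<alpha>_power_exponent:
  fixes q :: int
  assumes "prime n" "odd n" "q = 3 \<or> q = 5" "m > 0"
    and "q ^ m = \<bar>re_plus_im (\<alpha> ^ n)\<bar> \<or> q ^ m = \<bar>re_minus_im (\<alpha> ^ n)\<bar>"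
  shows "m = 1"
proof (rule ccontr)
  assume "m \<noteq> 1"
  with assms(4) have "2 \<le> m" by simp
  then have sq: "q ^ 2 dvd q ^ m"
    by (rule le_imp_power_dvd)
  with assms(5) have sq_dvd: "q ^ 2 dvd re_plus_im (\<alpha> ^ n) \<or> q ^ 2 dvd re_minus_im (\<alpha> ^ n)"
    by (metis dvd_abs_iff)
  have "int n = q"
    using assms(3)
  proof
    assume "q = 3"
    with sq_dvd \<alpha>_power_not_dvd_9[OF assms(2)] have "3 dvd n" by auto
    with assms(1) \<open>q = 3\<close> show ?thesis
      using primes_dvd_imp_eq[of 3 n] by simp
  next
    assume "q = 5"
    with sq_dvd \<alpha>_power_not_dvd_25[OF assms(2)] have "5 dvd n" by auto
    with assms(1) \<open>q = 5\<close> show ?thesis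
      using primes_dvd_imp_eq[of 5 n] by simp
  qed
  moreover have "\<alpha> ^ 5 = Gauss 404 1121"
    by (simp add: Gauss_mult eval_nat_numeral)
  moreover have "m = 2 \<or> q ^ 3 dvd q ^ m"
    using \<open>2 \<le> m\<close> le_imp_power_dvd[of 3 m q] by linarith
  ultimately show False
    using assms(3,5) sq by (auto simp: \<alpha>_power_3)
qed

section \<open>Powers of \<^term>\<open>\<alpha>\<close> modulo powers of 2\<close>

text \<open>Squaring doubles \<^term>\<open>c\<close>, because \<open>(1 + c z)\<^sup>2 - 1 = 2 c z (1 + (c div 2) z)\<close> and
  \<open>4 dvd c\<close> keeps the last factor prime to \<open>1 + i\<close>.\<close>

lemma \<alpha>_power_4_mult_minus_1_factor:
  assumes "k > 0"
  shows "\<exists>c z. c \<noteq> 0 \<and> 4 dvd c \<and> \<alpha> ^ (4 * k) - 1 = of_int c * z \<and> odd (re_plus_im z)"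
  using assms
proof (induction k rule: less_induct)
  case (less k)
  show ?case
  proof (cases "even k")
    case True
    then obtain j where k: "k = 2 * j" ..
    with less.prems have "0 < j" "j < k" by simp_all
    then obtain c z where "c \<noteq> 0" "4 dvd c" and cz: "\<alpha> ^ (4 * j) - 1 = of_int c * z"
      and z: "odd (re_plus_im z)"
      using less.IH by blast
    from \<open>4 dvd c\<close> obtain d where d: "c = 4 * d" ..
    have "\<alpha> ^ (4 * k) = (\<alpha> ^ (4 * j)) ^ 2"
      using k by (simp add: ac_simps flip: power_mult)
    then have "\<alpha> ^ (4 * k) - 1 = (\<alpha> ^ (4 * j) - 1) * (\<alpha> ^ (4 * j) + 1)"
      by (simp add: algebra_simps power2_eq_square)
    also have "\<dots> = of_int (2 * c) * (z * (1 + of_int (2 * d) * z))"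
      using cz d by (simp add: algebra_simps)
    finally have "\<alpha> ^ (4 * k) - 1 = of_int (2 * c) * (z * (1 + of_int (2 * d) * z))" .
    moreover have "odd (re_plus_im (z * (1 + of_int (2 * d) * z)))"
      using z by (simp add: odd_re_plus_im_mult re_plus_im_of_int_mult re_plus_im_def)
    moreover have "2 * c \<noteq> 0" "4 dvd 2 * c"
      using \<open>c \<noteq> 0\<close> \<open>4 dvd c\<close> by simp_all
    ultimately show ?thesis
      by blast
  next
    case False
    have "\<alpha> ^ (4 * k) - 1 = (\<alpha> ^ 4 - 1) * (\<Sum>i<k. (\<alpha> ^ 4) ^ i)"
      by (simp add: power_mult power_diff_1_eq)
    also have "\<alpha> ^ 4 - 1 = of_int 80 * Gauss 2 3"
      by (simp add: gauss_eq_iff Gauss_mult eval_nat_numeral)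
    finally have "\<alpha> ^ (4 * k) - 1 = of_int 80 * (Gauss 2 3 * (\<Sum>i<k. (\<alpha> ^ 4) ^ i))"
      by (simp add: mult.assoc)
    moreover have "odd (re_plus_im (\<alpha> ^ 4))"
      by (simp add: Gauss_mult eval_nat_numeral)
    then have "odd (re_plus_im (Gauss 2 3 * (\<Sum>i<k. (\<alpha> ^ 4) ^ i)))"
      using False by (simp add: odd_re_plus_im_mult odd_re_plus_im_sum odd_re_plus_im_power)
    moreover have "(80::int) \<noteq> 0" "4 dvd (80::int)"
      by simp_all
    ultimately show ?thesis
      by blast
  qed
qed

lemma \<alpha>_power_ne_power_mod_4:
  assumes "4 \<le> n"
  shows "re_plus_im (\<alpha> ^ n) \<noteq> re_plus_im (\<alpha> ^ (n mod 4))"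
    and "re_minus_im (\<alpha> ^ n) \<noteq> re_minus_im (\<alpha> ^ (n mod 4))"
proof -
  define r where "r = n mod 4"
  from assms have "0 < n div 4" by simp
  then obtain c z where "c \<noteq> 0" and cz: "\<alpha> ^ (4 * (n div 4)) - 1 = of_int c * z"
    and z: "odd (re_plus_im z)"
    using \<alpha>_power_4_mult_minus_1_factor by blast
  have "\<alpha> ^ n = \<alpha> ^ r * \<alpha> ^ (4 * (n div 4))"
    unfolding r_def by (metis mod_div_mult_eq mult.commute power_add)
  with cz have diff: "\<alpha> ^ n - \<alpha> ^ r = of_int c * (\<alpha> ^ r * z)"
    by (simp add: algebra_simps flip: cz)
  have "odd (re_plus_im \<alpha>)"
    by simp
  with z have "odd (re_plus_im (\<alpha> ^ r * z))" "odd (re_minus_im (\<alpha> ^ r * z))"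
    by (simp_all add: odd_re_plus_im_mult odd_re_plus_im_power odd_re_minus_im_iff)
  moreover have "re_plus_im (\<alpha> ^ n) - re_plus_im (\<alpha> ^ r) = c * re_plus_im (\<alpha> ^ r * z)"
    "re_minus_im (\<alpha> ^ n) - re_minus_im (\<alpha> ^ r) = c * re_minus_im (\<alpha> ^ r * z)"
    by (simp_all only: diff re_plus_im_of_int_mult re_minus_im_of_int_mult
        flip: re_plus_im_diff re_minus_im_diff)
  ultimately show "re_plus_im (\<alpha> ^ n) \<noteq> re_plus_im (\<alpha> ^ (n mod 4))"
    and "re_minus_im (\<alpha> ^ n) \<noteq> re_minus_im (\<alpha> ^ (n mod 4))"
    using \<open>c \<noteq> 0\<close> by (auto simp flip: r_def)
qed

lemma \<alpha>_power_abs_not_3_5: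
  assumes "odd n" "4 \<le> n"
  shows "\<bar>re_plus_im (\<alpha> ^ n)\<bar> \<notin> {3, 5}" and "\<bar>re_minus_im (\<alpha> ^ n)\<bar> \<notin> {3, 5}"
proof -
  have period: "of_int 80 dvd \<alpha> ^ 4 - 1"
    unfolding of_int_dvd_gauss_iff by (simp add: Gauss_mult eval_nat_numeral)
  have "n mod 4 \<in> {1, 3}"
    using assms by simp presburger
  then show "\<bar>re_plus_im (\<alpha> ^ n)\<bar> \<notin> {3, 5}" and "\<bar>re_minus_im (\<alpha> ^ n)\<bar> \<notin> {3, 5}"
    using re_plus_im_power_cong[OF period, of n] \<alpha>_power_ne_power_mod_4[OF assms(2)]
    by (auto simp: \<alpha>_power_3 cong_def abs_if minus_equation_iff split: if_splits)
qed

theorem theorem3: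
  fixes m p q x :: nat
  assumes "m > 0" and "x > 0"
    and "prime p" and "odd p" and "prime q" and "odd q"
    and "x^2 + q^(2*m) = 2 * 17^p"
  shows "m = 1 \<and> p = 3 \<and> q = 5 \<and> x = 99"
proof -
  define X Y where "X = int x" and "Y = int q ^ m"
  have pos: "X > 0" "Y > 0"
    using assms(2,5) by (simp_all add: X_def Y_def prime_gt_0_nat)
  have eq: "X ^ 2 + Y ^ 2 = 2 * 17 ^ p"
    using arg_cong[OF assms(7), of int] by (simp add: X_def Y_def mult.commute power_mult)
  have prime_dvd_Y: "r = q" if "prime r" "int r dvd Y" for r
  proof -
    from that(2) have "r dvd q ^ m"
      by (simp add: Y_def flip: of_nat_power)
    with that(1) assms(5) show ?thesis
      by (meson prime_dvd_power primes_dvd_imp_eq)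
  qed
  have q: "q = 3 \<or> q = 5"
    using sum_squares_eq_2_17_power_dvd_3_5[OF assms(4) pos eq] prime_dvd_Y[of 3] prime_dvd_Y[of 5]
    by auto
  then have "\<not> 17 dvd Y"
    using prime_dvd_Y[of 17] by auto
  then have XY: "(X = \<bar>re_minus_im (\<alpha> ^ p)\<bar> \<and> Y = \<bar>re_plus_im (\<alpha> ^ p)\<bar>) \<or>
      (X = \<bar>re_plus_im (\<alpha> ^ p)\<bar> \<and> Y = \<bar>re_minus_im (\<alpha> ^ p)\<bar>)"
    using sum_squares_eq_2_17_power[OF pos eq] by blast
  then have "m = 1"
    using prime_power_eq_abs_\<alpha>_power_exponent[of p "int q" m] assms(1,3,4) q by (auto simp: Y_def)
  with q have Y: "Y = 3 \<or> Y = 5"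
    by (auto simp: Y_def)
  have "p = 3"
  proof (rule ccontr)
    assume "p \<noteq> 3"
    with assms(3,4) have "4 \<le> p"
      using prime_ge_2_nat[of p] by presburger
    then show False
      using \<alpha>_power_abs_not_3_5[OF assms(4)] XY Y by auto
  qed
  with XY Y have "X = 99" "Y = 5"
    by (auto simp: \<alpha>_power_3)
  with \<open>m = 1\<close> \<open>p = 3\<close> show ?thesis
    by (simp add: X_def Y_def)
qed

end
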